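(* Let $X$ and $Y$ be topological vector spaces (over $\mathbb{R}$), let $\theta$ be the origin of $Y$, let $D$ be a nonempty convex compact subset of $X$, and let $K$ be a nonempty set. Let $F: D\times K \rightrightarrows Y$ and $G: D\times D\rightrightarrows Y$ be set-valued mappings satisfying: (i) for each $y\in K$, the set $\{x\in D: \theta\in F(x,y)\}$ is closed in $D$; (ii) $G$ is a KKM-type mapping on $D$; (iii) for each $y\in K$ there exists $z\in D$ such that for all $x\in D$, $\theta\in G(z,x)$ implies $\theta\in F(x,y)$. Then there exists $\bar x\in D$ such that $\theta\in F(\bar x,y)$ for all $y\in K$.
   Context: A set-valued mapping $G: D\times D\rightrightarrows Y$ is called a KKM-type mapping on $D$ if for every finite subset $\{x_1,\dots,x_n\}\subset D$ and every $x\in \operatorname{co}\{x_1,\dots,x_n\}\cap D$ there exists $j\in\{1,\dots,n\}$ such that $\theta\in G(x_j,x)$. Here $\operatorname{co}$ denotes the convex hull. *)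

theory Defs
  imports "HOL-Analysis.Analysis"
begin

class real_tvs = real_vector + topological_space +
  assumes tvs_add_cont:
    "\<And>a b::'a. filterlim (\<lambda>p. fst p + snd p) (nhds (a + b)) (nhds a \<times>\<^sub>F nhds b)"
  and tvs_scaleR_cont:
    "\<And>(c::real) (a::'a). filterlim (\<lambda>p. fst p *\<^sub>R snd p) (nhds (c *\<^sub>R a)) (nhds c \<times>\<^sub>F nhds a)"

definition KKM_type :: "'a::real_vector set \<Rightarrow> ('a \<Rightarrow> 'a \<Rightarrow> 'b::zero set) \<Rightarrow> bool" where
  "KKM_type D G \<longleftrightarrow>
     (\<forall>A. finite A \<and> A \<subseteq> D \<longrightarrow> (\<forall>x \<in> convex hull A \<inter> D. \<exists>a\<in>A. 0 \<in> G a x))"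

end

theory Submission
  imports Defs "HOL-Homology.Simplices"
begin

(* For finitely many y in K, the points z(y) from (iii) are the images of the vertices of a
   standard simplex under the map l \<mapsto> \<Sum>j l_j z(y_j) into D. Since G is KKM-type, (iii) makes
   the closed sets {x. 0 \<in> F(x,y)} cover this simplex in the KKM manner, so the classical KKM
   lemma gives them a common point. The sets therefore have the finite intersection property,
   and compactness of D gives a point common to all of them. The KKM lemma is needed for
   simplices of every dimension at once, so Brouwer's fixed point theorem is derived from Kuhn's
   combinatorial lemma on nat-indexed grids rather than taken from the library version, whose
   dimension is fixed by a type. *)

section \<open>Brouwer's fixed point theorem on nat-indexed cubes and simplices\<close>

lemma tendsto_fun_iff:
  fixes f :: "'c \<Rightarrow> 'i \<Rightarrow> 'b::topological_space"
  shows "(f \<longlongrightarrow> l) F \<longleftrightarrow> (\<forall>i. ((\<lambda>x. f x i) \<longlongrightarrow> l i) F)"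
  using limitin_componentwise[of "\<lambda>i. euclidean" UNIV f l F]
  by (simp add: euclidean_product_topology)

lemma tendsto_fun_approx:
  fixes a c :: "nat \<Rightarrow> 'i \<Rightarrow> real"
  assumes "c \<longlonglongrightarrow> l" and "\<And>k j. \<bar>a k j - c k j\<bar> \<le> e k" and "e \<longlonglongrightarrow> 0"
  shows "a \<longlonglongrightarrow> l"
  unfolding tendsto_fun_iff
proof
  fix j
  have "(\<lambda>k. a k j - c k j) \<longlonglongrightarrow> 0"
    using assms(2) by (intro Lim_null_comparison[OF _ assms(3)]) auto
  moreover have "(\<lambda>k. c k j) \<longlonglongrightarrow> l j"
    using assms(1) by (simp add: tendsto_fun_iff)
  ultimately have "(\<lambda>k. (a k j - c k j) + c k j) \<longlonglongrightarrow> 0 + l j"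
    by (rule tendsto_add)
  then show "(\<lambda>k. a k j) \<longlonglongrightarrow> l j"
    by simp
qed

definition unit_cube :: "nat \<Rightarrow> (nat \<Rightarrow> real) set" where
  "unit_cube n = {x. (\<forall>i<n. 0 \<le> x i \<and> x i \<le> 1) \<and> (\<forall>i\<ge>n. x i = 0)}"

lemma unit_cube_eq_PiE: "unit_cube n = Pi\<^sub>E UNIV (\<lambda>i. if i < n then {0..1} else {0})"
proof -
  have "x i \<in> (if i < n then {0..1} else {0}) \<longleftrightarrow> (i < n \<longrightarrow> 0 \<le> x i \<and> x i \<le> 1) \<and> (n \<le> i \<longrightarrow> x i = 0)"
    for x :: "nat \<Rightarrow> real" and i
    by auto
  then show ?thesis
    unfolding PiE_UNIV_domain unit_cube_def Pi_iff by (auto simp: all_conj_distrib)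
qed

lemma compact_unit_cube: "compact (unit_cube n)"
  unfolding unit_cube_eq_PiE
  using compactin_PiE[of "\<lambda>i. euclideanreal" UNIV "\<lambda>i. if i < n then {0..1} else {0}"]
  by (simp add: euclidean_product_topology)

definition cube_grid :: "nat \<Rightarrow> nat \<Rightarrow> (nat \<Rightarrow> nat) \<Rightarrow> nat \<Rightarrow> real" where
  "cube_grid n p y = (\<lambda>i. if i < n then real (y i) / real p else 0)"

lemma cube_grid_in_unit_cube:
  assumes "0 < p" and "\<forall>i<n. y i \<le> p"
  shows "cube_grid n p y \<in> unit_cube n"
  using assms by (auto simp: unit_cube_def cube_grid_def)

lemma cube_grid_adjacent:
  assumes "0 < p" and "\<forall>j<n. q j \<le> r j \<and> r j \<le> q j + 1"
  shows "\<bar>cube_grid n p r j - cube_grid n p q j\<bar> \<le> 1 / p"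
proof (cases "j < n")
  case True
  have "cube_grid n p r j - cube_grid n p q j = (real (r j) - real (q j)) / real p"
    using True by (simp add: cube_grid_def diff_divide_distrib)
  moreover have "0 \<le> real (r j) - real (q j)" "real (r j) - real (q j) \<le> 1"
    using assms(2) True by auto
  ultimately show ?thesis
    using assms(1) by (simp add: divide_right_mono)
qed (simp add: cube_grid_def)

lemma kuhn_cube_grid:
  fixes f :: "(nat \<Rightarrow> real) \<Rightarrow> nat \<Rightarrow> real" and p :: nat
  assumes p: "0 < p" and f: "f \<in> unit_cube n \<rightarrow> unit_cube n"
  obtains q where "\<forall>i<n. q i < p"
    and "\<forall>i<n. \<exists>r s. (\<forall>j<n. q j \<le> r j \<and> r j \<le> q j + 1) \<and> (\<forall>j<n. q j \<le> s j \<and> s j \<le> q j + 1) \<and>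
           cube_grid n p r i \<le> f (cube_grid n p r) i \<and> f (cube_grid n p s) i \<le> cube_grid n p s i"
proof -
  let ?g = "cube_grid n p"
  \<comment> \<open>The disjunct \<open>y i = 0\<close> and the strict inequality give Kuhn's boundary conditions:
      label 0 on the face \<open>y i = 0\<close>, label 1 on the face \<open>y i = p\<close>.\<close>
  define label where "label y i = (if y i = 0 \<or> ?g y i < f (?g y) i then 0 else 1::nat)" for y i
  have f_grid: "0 \<le> f (?g y) i \<and> f (?g y) i \<le> 1" if "\<forall>i<n. y i \<le> p" "i < n" for y i
    using funcset_mem[OF f cube_grid_in_unit_cube[OF p that(1)]] that(2) by (simp add: unit_cube_def)
  have label_01: "\<forall>x. (\<forall>i<n. x i \<le> p) \<longrightarrow> (\<forall>i<n. label x i = 0 \<or> label x i = 1)"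
    and label_0: "\<forall>x. (\<forall>i<n. x i \<le> p) \<longrightarrow> (\<forall>i<n. x i = 0 \<longrightarrow> label x i = 0)"
    by (simp_all add: label_def)
  have label_1: "\<forall>x. (\<forall>i<n. x i \<le> p) \<longrightarrow> (\<forall>i<n. x i = p \<longrightarrow> label x i = 1)"
  proof (intro allI impI)
    fix x i assume x: "\<forall>i<n. x i \<le> p" "i < n" "x i = p"
    then have "?g x i = 1" using p by (simp add: cube_grid_def)
    then show "label x i = 1" using f_grid[OF x(1,2)] x(3) p by (simp add: label_def)
  qed
  obtain q where q: "\<forall>i<n. q i < p"
    and adj: "\<forall>i<n. \<exists>r s. (\<forall>j<n. q j \<le> r j \<and> r j \<le> q j + 1) \<and>
                (\<forall>j<n. q j \<le> s j \<and> s j \<le> q j + 1) \<and> label r i \<noteq> label s i"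
    by (rule kuhn_lemma[OF p label_01 label_0 label_1])
  have below: "?g r i \<le> f (?g r) i" if "\<forall>j<n. q j \<le> r j \<and> r j \<le> q j + 1" "i < n" "label r i = 0" for r i
  proof -
    have "\<forall>j<n. r j \<le> p" using that(1) q by fastforce
    then show ?thesis
      using that(3) f_grid[OF _ that(2)] by (auto simp: label_def cube_grid_def split: if_splits)
  qed
  have above: "f (?g r) i \<le> ?g r i" if "label r i \<noteq> 0" for r i
    using that by (auto simp: label_def split: if_splits)
  show thesis
  proof (rule that[OF q], intro allI impI)
    fix i assume i: "i < n"
    obtain r s where rs: "\<forall>j<n. q j \<le> r j \<and> r j \<le> q j + 1" "\<forall>j<n. q j \<le> s j \<and> s j \<le> q j + 1"
      and lab: "label r i \<noteq> label s i"
      using adj[rule_format, OF i] by blast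
    show "\<exists>r s. (\<forall>j<n. q j \<le> r j \<and> r j \<le> q j + 1) \<and> (\<forall>j<n. q j \<le> s j \<and> s j \<le> q j + 1) \<and>
        ?g r i \<le> f (?g r) i \<and> f (?g s) i \<le> ?g s i"
    proof (cases "label r i = 0")
      case True
      then have "?g r i \<le> f (?g r) i" "f (?g s) i \<le> ?g s i"
        using below[OF rs(1) i] above lab by auto
      then show ?thesis
        using rs by (intro exI[of _ r] exI[of _ s]) simp
    next
      case False
      with lab have "label s i = 0" by (auto simp: label_def split: if_splits)
      then have "?g s i \<le> f (?g s) i" "f (?g r) i \<le> ?g r i"
        using below[OF rs(2) i] above False by auto
      then show ?thesis
        using rs by (intro exI[of _ s] exI[of _ r]) simp
    qed
  qed
qed

lemma kuhn_unit_cube_approx: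
  fixes f :: "(nat \<Rightarrow> real) \<Rightarrow> nat \<Rightarrow> real" and p :: nat
  assumes p: "0 < p" and f: "f \<in> unit_cube n \<rightarrow> unit_cube n"
  shows "\<exists>c\<in>unit_cube n. \<forall>i<n. \<exists>a\<in>unit_cube n. \<exists>b\<in>unit_cube n.
           a i \<le> f a i \<and> f b i \<le> b i \<and> (\<forall>j. \<bar>a j - c j\<bar> \<le> 1 / p \<and> \<bar>b j - c j\<bar> \<le> 1 / p)"
proof -
  obtain q where q: "\<forall>i<n. q i < p"
    and adj: "\<forall>i<n. \<exists>r s. (\<forall>j<n. q j \<le> r j \<and> r j \<le> q j + 1) \<and> (\<forall>j<n. q j \<le> s j \<and> s j \<le> q j + 1) \<and>
           cube_grid n p r i \<le> f (cube_grid n p r) i \<and> f (cube_grid n p s) i \<le> cube_grid n p s i"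
    using kuhn_cube_grid[OF p f] by blast
  have in_cube: "cube_grid n p r \<in> unit_cube n" if "\<forall>j<n. q j \<le> r j \<and> r j \<le> q j + 1" for r
  proof -
    have "\<forall>j<n. r j \<le> p" using that q by fastforce
    then show ?thesis by (rule cube_grid_in_unit_cube[OF p])
  qed
  have "cube_grid n p q \<in> unit_cube n"
    using q cube_grid_in_unit_cube[OF p] less_imp_le by blast
  moreover have "\<exists>a\<in>unit_cube n. \<exists>b\<in>unit_cube n. a i \<le> f a i \<and> f b i \<le> b i \<and>
      (\<forall>j. \<bar>a j - cube_grid n p q j\<bar> \<le> 1 / p \<and> \<bar>b j - cube_grid n p q j\<bar> \<le> 1 / p)" if i: "i < n" for i
  proof -
    obtain r s where rs: "\<forall>j<n. q j \<le> r j \<and> r j \<le> q j + 1" "\<forall>j<n. q j \<le> s j \<and> s j \<le> q j + 1"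
      and "cube_grid n p r i \<le> f (cube_grid n p r) i" "f (cube_grid n p s) i \<le> cube_grid n p s i"
      using adj[rule_format, OF i] by blast
    then show ?thesis
      using in_cube[OF rs(1)] in_cube[OF rs(2)] cube_grid_adjacent[OF p rs(1)] cube_grid_adjacent[OF p rs(2)]
      by blast
  qed
  ultimately show ?thesis
    by blast
qed

lemma tendsto_close_subseq:
  fixes f :: "(nat \<Rightarrow> real) \<Rightarrow> nat \<Rightarrow> real" and c x :: "nat \<Rightarrow> nat \<Rightarrow> real"
  assumes cont: "continuous_on S f" and cL: "(c \<circ> \<sigma>) \<longlonglongrightarrow> L" and L: "L \<in> S"
    and \<sigma>: "strict_mono \<sigma>" and x: "\<And>k. x k \<in> S" and close: "\<And>k j. \<bar>x k j - c k j\<bar> \<le> 1 / Suc k"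
  shows "(\<lambda>k. x (\<sigma> k) i) \<longlonglongrightarrow> L i" and "(\<lambda>k. f (x (\<sigma> k)) i) \<longlonglongrightarrow> f L i"
proof -
  have "(\<lambda>k. 1 / real (Suc (\<sigma> k))) \<longlonglongrightarrow> 0"
    using LIMSEQ_subseq_LIMSEQ[OF LIMSEQ_inverse_real_of_nat \<sigma>] by (simp add: o_def inverse_eq_divide)
  then have "(x \<circ> \<sigma>) \<longlonglongrightarrow> L"
    by (intro tendsto_fun_approx[OF cL]) (unfold o_def, rule close)
  moreover have "(\<lambda>k. f (x (\<sigma> k))) \<longlonglongrightarrow> f L"
    using continuous_on_tendsto_compose[OF cont calculation L] x by (simp add: o_def)
  ultimately show "(\<lambda>k. x (\<sigma> k) i) \<longlonglongrightarrow> L i" "(\<lambda>k. f (x (\<sigma> k)) i) \<longlonglongrightarrow> f L i"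
    by (simp_all add: tendsto_fun_iff o_def)
qed

lemma brouwer_unit_cube:
  fixes f :: "(nat \<Rightarrow> real) \<Rightarrow> nat \<Rightarrow> real"
  assumes cont: "continuous_on (unit_cube n) f" and f: "f \<in> unit_cube n \<rightarrow> unit_cube n"
  shows "\<exists>x\<in>unit_cube n. f x = x"
proof -
  have "\<forall>k. \<exists>c. c \<in> unit_cube n \<and> (\<forall>i<n. \<exists>a\<in>unit_cube n. \<exists>b\<in>unit_cube n.
          a i \<le> f a i \<and> f b i \<le> b i \<and>
          (\<forall>j. \<bar>a j - c j\<bar> \<le> 1 / Suc k \<and> \<bar>b j - c j\<bar> \<le> 1 / Suc k))"
    using kuhn_unit_cube_approx[OF zero_less_Suc f] by (simp add: Bex_def)
  from choice[OF this] obtain c where c: "\<forall>k. c k \<in> unit_cube n \<and> (\<forall>i<n.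
          \<exists>a\<in>unit_cube n. \<exists>b\<in>unit_cube n. a i \<le> f a i \<and> f b i \<le> b i \<and>
          (\<forall>j. \<bar>a j - c k j\<bar> \<le> 1 / Suc k \<and> \<bar>b j - c k j\<bar> \<le> 1 / Suc k))" ..
  then obtain L \<sigma> where L: "L \<in> unit_cube n" and \<sigma>: "strict_mono \<sigma>" and cL: "(c \<circ> \<sigma>) \<longlonglongrightarrow> L"
    using seq_compactE[OF compact_imp_seq_compact[OF compact_unit_cube], of c] by blast
  note lim = tendsto_close_subseq[OF cont cL L \<sigma>]
  have "f L i = L i" for i
  proof (cases "i < n")
    case True
    have "\<forall>k. \<exists>a. a \<in> unit_cube n \<and> a i \<le> f a i \<and> (\<forall>j. \<bar>a j - c k j\<bar> \<le> 1 / Suc k)"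
      using c True by blast
    from choice[OF this] obtain a where a: "\<forall>k. a k \<in> unit_cube n \<and> a k i \<le> f (a k) i \<and>
        (\<forall>j. \<bar>a k j - c k j\<bar> \<le> 1 / Suc k)" ..
    have "\<forall>k. \<exists>b. b \<in> unit_cube n \<and> f b i \<le> b i \<and> (\<forall>j. \<bar>b j - c k j\<bar> \<le> 1 / Suc k)"
      using c True by blast
    from choice[OF this] obtain b where b: "\<forall>k. b k \<in> unit_cube n \<and> f (b k) i \<le> b k i \<and>
        (\<forall>j. \<bar>b k j - c k j\<bar> \<le> 1 / Suc k)" ..
    have "L i \<le> f L i"
      by (rule LIMSEQ_le[OF lim[of a]]) (use a in auto)
    moreover have "f L i \<le> L i"
      by (rule LIMSEQ_le[OF lim(2)[of b] lim(1)[of b]]) (use b in auto)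
    ultimately show ?thesis by simp
  next
    case False
    moreover have "f L \<in> unit_cube n" using f L by blast
    ultimately show ?thesis using L by (simp add: unit_cube_def)
  qed
  then show ?thesis using L by auto
qed

lemma continuous_on_fun_apply: "continuous_on S (\<lambda>x::'a \<Rightarrow> 'b::topological_space. x i)"
  by (rule continuous_on_subset[OF continuous_on_product_coordinates]) simp

(* Rescales the first p coordinates until they sum to at most 1 and puts the remaining mass
   into coordinate p; on the simplex with its last coordinate dropped it is a left inverse of
   truncation, which makes the simplex a retract of the cube. *)
definition cube_to_simplex :: "nat \<Rightarrow> (nat \<Rightarrow> real) \<Rightarrow> nat \<Rightarrow> real" where
  "cube_to_simplex p x i =
     (if i < p then x i / max 1 (\<Sum>j<p. x j)
      else if i = p then 1 - (\<Sum>j<p. x j) / max 1 (\<Sum>j<p. x j) else 0)"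

lemma sum_atMost_split_last: "(\<Sum>i\<le>p. z i) = (\<Sum>i<p. z i) + z (p::nat)"
  unfolding lessThan_Suc_atMost[symmetric] by (rule sum.lessThan_Suc)

lemma continuous_on_cube_to_simplex: "continuous_on (unit_cube p) (cube_to_simplex p)"
proof (rule continuous_on_coordinatewise_then_product)
  fix i
  have "continuous_on (unit_cube p) (\<lambda>x. max 1 (\<Sum>j<p. x j))"
    by (intro continuous_intros continuous_on_fun_apply)
  moreover have "max 1 (\<Sum>j<p. x j) \<noteq> 0" for x :: "nat \<Rightarrow> real"
    by linarith
  ultimately show "continuous_on (unit_cube p) (\<lambda>x. cube_to_simplex p x i)"
    unfolding cube_to_simplex_def
    by (cases "i < p"; cases "i = p") (auto intro!: continuous_intros continuous_on_fun_apply)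
qed

lemma cube_to_simplex_in_standard_simplex:
  assumes x: "x \<in> unit_cube p"
  shows "cube_to_simplex p x \<in> standard_simplex p"
proof -
  let ?m = "max 1 (\<Sum>j<p. x j)"
  have "0 \<le> (\<Sum>j<p. x j)" using x by (intro sum_nonneg) (simp add: unit_cube_def)
  moreover have "x i / ?m \<le> 1" "0 \<le> x i / ?m" if "i < p" for i
    using x that by (auto simp: unit_cube_def divide_le_eq_1 intro: order_trans)
  moreover have "(\<Sum>i<p. cube_to_simplex p x i) = (\<Sum>j<p. x j) / ?m"
    by (simp add: cube_to_simplex_def sum_divide_distrib)
  ultimately show ?thesis
    by (auto simp: standard_simplex_def sum_atMost_split_last cube_to_simplex_def divide_le_eq_1)
qed

lemma cube_to_simplex_truncate:
  assumes y: "y \<in> standard_simplex p"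
  shows "cube_to_simplex p (\<lambda>i. if i < p then y i else 0) = y"
proof
  fix i
  have "0 \<le> y p" "(\<Sum>j\<le>p. y j) = 1"
    using y by (simp_all add: standard_simplex_def)
  then have "(\<Sum>j<p. y j) \<le> 1"
    using sum_atMost_split_last[of y p] by linarith
  then have "max 1 (\<Sum>j<p. if j < p then y j else 0) = 1"
    by simp
  then show "cube_to_simplex p (\<lambda>i. if i < p then y i else 0) i = y i"
    using y sum_atMost_split_last[of y p] by (auto simp: cube_to_simplex_def standard_simplex_def)
qed

lemma brouwer_standard_simplex:
  fixes g :: "(nat \<Rightarrow> real) \<Rightarrow> nat \<Rightarrow> real"
  assumes "continuous_on (standard_simplex p) g" and "g \<in> standard_simplex p \<rightarrow> standard_simplex p"
  shows "\<exists>x\<in>standard_simplex p. g x = x"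
proof -
  let ?trunc = "\<lambda>y i. if i < p then y i else 0"
  have "continuous_on (standard_simplex p) (\<lambda>y. ?trunc y i)" for i
    by (cases "i < p") (simp_all add: continuous_on_fun_apply)
  then have "continuous_on (standard_simplex p) ?trunc"
    by (rule continuous_on_coordinatewise_then_product)
  moreover have "?trunc \<in> standard_simplex p \<rightarrow> unit_cube p"
    by (auto simp: standard_simplex_def unit_cube_def)
  moreover have "cube_to_simplex p \<in> unit_cube p \<rightarrow> standard_simplex p"
    using cube_to_simplex_in_standard_simplex by blast
  ultimately obtain y where "y \<in> standard_simplex p" "g y = y"
    using invertible_fixpoint_property[of "standard_simplex p" ?trunc "unit_cube p" "cube_to_simplex p" g]
      continuous_on_cube_to_simplex cube_to_simplex_truncate brouwer_unit_cube assms
    by blast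
  then show ?thesis by blast
qed

section \<open>The KKM lemma\<close>

lemma normalized_in_standard_simplex:
  fixes d :: "nat \<Rightarrow> real"
  assumes nonneg: "\<And>j. j \<le> p \<Longrightarrow> 0 \<le> d j" and pos: "0 < (\<Sum>j\<le>p. d j)"
  shows "(\<lambda>j. if j \<le> p then d j / (\<Sum>i\<le>p. d i) else 0) \<in> standard_simplex p"
proof -
  let ?S = "\<Sum>i\<le>p. d i"
  have "(\<Sum>j\<le>p. if j \<le> p then d j / ?S else 0) = ?S / ?S"
    unfolding sum_divide_distrib by (rule sum.cong) simp_all
  moreover have "d j \<le> ?S" if "j \<le> p" for j
    using that nonneg by (intro member_le_sum) auto
  ultimately show ?thesis
    using pos nonneg by (simp add: standard_simplex_def)
qed

lemma KKM_standard_simplex: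
  fixes C :: "nat \<Rightarrow> (nat \<Rightarrow> real) set"
  assumes closed: "\<And>j. j \<le> p \<Longrightarrow> closed (C j)"
    and cover: "\<And>l. l \<in> standard_simplex p \<Longrightarrow> \<exists>j\<le>p. 0 < l j \<and> l \<in> C j"
  shows "\<exists>l\<in>standard_simplex p. \<forall>j\<le>p. l \<in> C j"
proof (rule ccontr)
  assume none: "\<not> (\<exists>l\<in>standard_simplex p. \<forall>j\<le>p. l \<in> C j)"
  have nonempty: "C j \<noteq> {}" if "j \<le> p" for j
  proof -
    let ?e = "\<lambda>i. if i = j then 1 else 0 :: real"
    have "?e \<in> standard_simplex p" using that by simp
    then obtain k where "0 < ?e k" "?e \<in> C k" using cover by blast
    then show ?thesis by (auto split: if_splits)
  qed
  define S where "S l = (\<Sum>j\<le>p. infdist l (C j))" for l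
  have S_pos: "0 < S l" if "l \<in> standard_simplex p" for l
  proof -
    have "\<not> (\<forall>j\<le>p. l \<in> C j)"
      using none that by auto
    then obtain j where j: "j \<le> p" "l \<notin> C j"
      by auto
    have "0 < infdist l (C j)"
      using infdist_pos_not_in_closed[OF closed[OF j(1)] nonempty[OF j(1)] j(2)] .
    then show ?thesis
      unfolding S_def by (intro sum_pos2[of _ j]) (auto simp: infdist_nonneg j(1))
  qed
  \<comment> \<open>At a fixed point, every positive coordinate \<open>l j\<close> forces \<open>l \<notin> C j\<close>.\<close>
  define g where "g l = (\<lambda>j. if j \<le> p then infdist l (C j) / S l else 0)" for l
  have "continuous_on (standard_simplex p) (\<lambda>l. g l j)" for j
  proof -
    have cont_S: "continuous_on (standard_simplex p) S"
      unfolding S_def by (intro continuous_intros)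
    have "\<forall>l\<in>standard_simplex p. S l \<noteq> 0"
      using S_pos by force
    from continuous_on_divide[OF continuous_on_infdist[OF continuous_on_id] cont_S this] show ?thesis
      by (cases "j \<le> p") (simp_all add: g_def)
  qed
  then have "continuous_on (standard_simplex p) g"
    by (rule continuous_on_coordinatewise_then_product)
  moreover have "g \<in> standard_simplex p \<rightarrow> standard_simplex p"
  proof
    fix l assume "l \<in> standard_simplex p"
    from normalized_in_standard_simplex[OF infdist_nonneg S_pos[OF this, unfolded S_def]]
    show "g l \<in> standard_simplex p"
      unfolding g_def S_def .
  qed
  ultimately obtain l where l: "l \<in> standard_simplex p" "g l = l"
    using brouwer_standard_simplex by blast
  then obtain j where "j \<le> p" "0 < l j" "l \<in> C j"
    using cover by blast
  moreover have "g l j = 0" if "l \<in> C j"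
    using that by (simp add: g_def)
  ultimately show False
    using l(2) by auto
qed

lemma sum_scaleR_in_convex_hull_support:
  fixes y :: "nat \<Rightarrow> 'a::real_vector"
  assumes l: "l \<in> standard_simplex p"
  shows "(\<Sum>j\<le>p. l j *\<^sub>R y j) \<in> convex hull (y ` {j. j \<le> p \<and> 0 < l j})"
proof -
  let ?J = "{j. j \<le> p \<and> 0 < l j}"
  have zero: "\<forall>j\<in>{..p} - ?J. l j = 0"
    using l by (auto simp: standard_simplex_def less_le)
  have J: "finite {..p}" "?J \<subseteq> {..p}"
    by auto
  have "(\<Sum>j\<le>p. l j *\<^sub>R y j) = (\<Sum>j\<in>?J. l j *\<^sub>R y j)"
    by (rule sum.mono_neutral_right[OF J]) (metis zero scale_zero_left)
  moreover have "(\<Sum>j\<in>?J. l j *\<^sub>R y j) \<in> convex hull (y ` ?J)"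
  proof (rule convex_sum[OF _ convex_convex_hull])
    show "(\<Sum>j\<in>?J. l j) = 1"
      using l sum.mono_neutral_right[OF J zero] by (simp add: standard_simplex_def)
  qed (auto intro: hull_inc)
  ultimately show ?thesis
    by simp
qed

section \<open>KKM-type mappings on real topological vector spaces\<close>

lemma tendsto_scaleR_tvs [tendsto_intros]:
  fixes f :: "'c \<Rightarrow> 'a::real_tvs" and c :: "'c \<Rightarrow> real"
  assumes "(c \<longlongrightarrow> c0) F" and "(f \<longlongrightarrow> a) F"
  shows "((\<lambda>x. c x *\<^sub>R f x) \<longlongrightarrow> c0 *\<^sub>R a) F"
proof -
  have "filterlim (\<lambda>x. (c x, f x)) (nhds c0 \<times>\<^sub>F nhds a) F"
    using tendsto_Pair[OF assms] by (simp add: nhds_prod)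
  from filterlim_compose[OF tvs_scaleR_cont this] show ?thesis by simp
qed

lemma continuous_on_scaleR_tvs [continuous_intros]:
  fixes f :: "'c::topological_space \<Rightarrow> 'a::real_tvs" and c :: "'c \<Rightarrow> real"
  assumes "continuous_on S c" and "continuous_on S f"
  shows "continuous_on S (\<lambda>x. c x *\<^sub>R f x)"
  using assms unfolding continuous_on_def by (blast intro: tendsto_scaleR_tvs)

lemma tendsto_uminus_tvs:
  fixes a :: "'a::real_tvs"
  shows "(uminus \<longlongrightarrow> - a) (nhds a)"
proof -
  have "((\<lambda>x. (- 1::real) *\<^sub>R x) \<longlongrightarrow> (- 1::real) *\<^sub>R a) (nhds a)"
    by (rule tendsto_scaleR_tvs[OF tendsto_const filterlim_ident])
  then show ?thesis
    by simp
qed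

instance real_tvs \<subseteq> topological_ab_group_add
  by standard (use tvs_add_cont tendsto_uminus_tvs in auto)

lemma KKM_tvs:
  fixes w :: "'i \<Rightarrow> 'a::real_tvs" and T :: "'i \<Rightarrow> 'a set"
  assumes "finite I" and "I \<noteq> {}" and closed: "\<And>i. i \<in> I \<Longrightarrow> closed (T i)"
    and cover: "\<And>J. J \<subseteq> I \<Longrightarrow> convex hull (w ` J) \<subseteq> (\<Union>i\<in>J. T i)"
  shows "convex hull (w ` I) \<inter> (\<Inter>i\<in>I. T i) \<noteq> {}"
proof -
  obtain p where "card I = Suc p"
    using assms(1,2) by (metis card_0_eq not0_implies_Suc)
  then obtain e where e: "bij_betw e {..p} I"
    using ex_bij_betw_nat_finite[OF assms(1)] by (metis atLeast0AtMost atLeast0LessThan lessThan_Suc_atMost)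
  then have eI: "e j \<in> I" if "j \<le> p" for j
    using that bij_betwE by blast
  define comb where "comb l = (\<Sum>j\<le>p. l j *\<^sub>R w (e j))" for l :: "nat \<Rightarrow> real"
  have comb_hull: "comb l \<in> convex hull (w ` e ` {j. j \<le> p \<and> 0 < l j})"
    if "l \<in> standard_simplex p" for l
    using sum_scaleR_in_convex_hull_support[OF that, of "\<lambda>j. w (e j)"] by (simp add: comb_def image_image)
  have "\<exists>l\<in>standard_simplex p. \<forall>j\<le>p. l \<in> comb -` T (e j)"
  proof (rule KKM_standard_simplex)
    have "continuous_on UNIV comb"
      unfolding comb_def by (intro continuous_intros continuous_on_fun_apply)
    then show "closed (comb -` T (e j))" if "j \<le> p" for j
      using continuous_on_closed_vimage[of UNIV comb] closed eI that by simp
    fix l assume l: "l \<in> standard_simplex p"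
    have "e ` {j. j \<le> p \<and> 0 < l j} \<subseteq> I"
      using eI by blast
    then have "comb l \<in> (\<Union>i\<in>e ` {j. j \<le> p \<and> 0 < l j}. T i)"
      using cover comb_hull[OF l] by blast
    then show "\<exists>j\<le>p. 0 < l j \<and> l \<in> comb -` T (e j)"
      by blast
  qed
  then obtain l where l: "l \<in> standard_simplex p" and lT: "\<And>j. j \<le> p \<Longrightarrow> comb l \<in> T (e j)"
    by blast
  have "w ` e ` {j. j \<le> p \<and> 0 < l j} \<subseteq> w ` I"
    using eI by blast
  then have "comb l \<in> convex hull (w ` I)"
    using hull_mono comb_hull[OF l] by blast
  moreover have "comb l \<in> (\<Inter>i\<in>I. T i)"
    using lT e by (auto simp: bij_betw_def)
  ultimately show ?thesis by blast
qed

lemma KKM_type_finite_intersection: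
  fixes D :: "'a::real_tvs set" and G :: "'a \<Rightarrow> 'a \<Rightarrow> 'b::zero set"
  assumes "convex D" and "KKM_type D G" and "finite K" and "K \<noteq> {}"
    and "\<And>y. y \<in> K \<Longrightarrow> closed (T y)" and zD: "\<And>y. y \<in> K \<Longrightarrow> z y \<in> D"
    and zT: "\<And>x y. y \<in> K \<Longrightarrow> x \<in> D \<Longrightarrow> 0 \<in> G (z y) x \<Longrightarrow> x \<in> T y"
  shows "D \<inter> (\<Inter>y\<in>K. T y) \<noteq> {}"
proof -
  have hull_D: "convex hull (z ` J) \<subseteq> D" if "J \<subseteq> K" for J
    using that zD \<open>convex D\<close> by (intro hull_minimal) auto
  have "convex hull (z ` K) \<inter> (\<Inter>y\<in>K. T y) \<noteq> {}"
  proof (rule KKM_tvs[OF assms(3,4,5)])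
    fix J assume J: "J \<subseteq> K"
    show "convex hull (z ` J) \<subseteq> (\<Union>y\<in>J. T y)"
    proof
      fix x assume x: "x \<in> convex hull (z ` J)"
      have "finite J"
        using J \<open>finite K\<close> by (rule finite_subset)
      then have "finite (z ` J)" "z ` J \<subseteq> D"
        using J zD by auto
      then obtain y where "y \<in> J" "0 \<in> G (z y) x"
        using \<open>KKM_type D G\<close> x hull_D[OF J] unfolding KKM_type_def by blast
      then show "x \<in> (\<Union>y\<in>J. T y)"
        using zT J x hull_D[OF J] by blast
    qed
  qed
  then show ?thesis
    using hull_D by blast
qed

theorem theorem2p2:
  fixes D :: "'a::real_tvs set" and K :: "'k set"
    and F :: "'a \<Rightarrow> 'k \<Rightarrow> 'b::real_tvs set"
    and G :: "'a \<Rightarrow> 'a \<Rightarrow> 'b set"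
  assumes "D \<noteq> {}" and "convex D" and "compact D" and "K \<noteq> {}"
    and "\<And>y. y \<in> K \<Longrightarrow> closedin (top_of_set D) {x \<in> D. 0 \<in> F x y}"
    and "KKM_type D G"
    and "\<And>y. y \<in> K \<Longrightarrow> \<exists>z\<in>D. \<forall>x\<in>D. 0 \<in> G z x \<longrightarrow> 0 \<in> F x y"
  shows "\<exists>xb\<in>D. \<forall>y\<in>K. 0 \<in> F xb y"
proof -
  obtain T where T: "\<And>y. y \<in> K \<Longrightarrow> closed (T y) \<and> {x \<in> D. 0 \<in> F x y} = D \<inter> T y"
    using assms(5) unfolding closedin_closed by metis
  obtain z where z: "\<And>y. y \<in> K \<Longrightarrow> z y \<in> D \<and> (\<forall>x\<in>D. 0 \<in> G (z y) x \<longrightarrow> 0 \<in> F x y)"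
    using assms(7) by metis
  have "D \<inter> \<Inter>(T ` K) \<noteq> {}"
  proof (rule compact_imp_fip[OF \<open>compact D\<close>])
    show "closed S" if "S \<in> T ` K" for S
      using that T by blast
    fix Ts assume "finite Ts" "Ts \<subseteq> T ` K"
    then obtain L where L: "L \<subseteq> K" "finite L" "Ts = T ` L"
      by (metis finite_subset_image)
    show "D \<inter> \<Inter>Ts \<noteq> {}"
    proof (cases "L = {}")
      case False
      show ?thesis
        unfolding L(3)
        by (rule KKM_type_finite_intersection[OF \<open>convex D\<close> \<open>KKM_type D G\<close> L(2) False])
          (use L(1) T z in blast)+
    qed (use L(3) \<open>D \<noteq> {}\<close> in simp)
  qed
  then show ?thesis
    using T by blast
qed

end
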